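(* Let $J$ be either a closed interval or a circle, and let $\gamma:J\to\mathbb{R}^n$ be a continuous map of bounded variation with total variation $l$. Then $\mathcal{H}^2(\gamma(J)\times\gamma(J))\leq(\pi/2)\,l^2$. In particular, $\gamma(J)\times\gamma(J)\subset\mathbb{R}^{2n}$ has finite $2$-dimensional Hausdorff measure.
   Context: $\mathcal{H}^2$ denotes $2$-dimensional Hausdorff measure, normalized so that $\mathcal{H}^2(E)=\lim_{\varepsilon\to 0}\inf\{(\pi/4)\sum_j \mathrm{diam}(A_j)^2 : E\subset\bigcup_j A_j,\ \mathrm{diam}(A_j)<\varepsilon\}$ (countable covers). *)

theory Defs
  imports "HOL-Analysis.Analysis"
begin

text \<open>The delta-approximating outer measure: infimum over countable covers
  (indexed by nat; finite covers are included via empty sets) by sets of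
  diameter less than delta. Unbounded sets have infinite diameter and are
  therefore excluded.\<close>
definition hausdorff2_approx :: "real \<Rightarrow> 'a::metric_space set \<Rightarrow> ennreal" where
  "hausdorff2_approx \<delta> E =
     (INF A \<in> {A :: nat \<Rightarrow> 'a set. E \<subseteq> (\<Union>j. A j) \<and>
                 (\<forall>j. bounded (A j) \<and> diameter (A j) < \<delta>)}.
        (\<Sum>j. ennreal (pi / 4 * (diameter (A j))\<^sup>2)))"

text \<open>The limit as delta tends to 0; the approximations are nonincreasing in
  delta, so the limit is the supremum.\<close>
definition hausdorff2 :: "'a::metric_space set \<Rightarrow> ennreal" where
  "hausdorff2 E = (SUP \<delta> \<in> {0<..}. hausdorff2_approx \<delta> E)"

definition partition_sums :: "(real \<Rightarrow> 'a::real_normed_vector) \<Rightarrow> real \<Rightarrow> real \<Rightarrow> real set" where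
  "partition_sums g a b =
     {(\<Sum>i<k. norm (g (t (Suc i)) - g (t i))) | t k.
        t 0 = a \<and> t k = b \<and> (\<forall>i<k. t i \<le> t (Suc i))}"

definition bounded_variation_on :: "(real \<Rightarrow> 'a::real_normed_vector) \<Rightarrow> real \<Rightarrow> real \<Rightarrow> bool" where
  "bounded_variation_on g a b = bdd_above (partition_sums g a b)"

definition total_variation :: "(real \<Rightarrow> 'a::real_normed_vector) \<Rightarrow> real \<Rightarrow> real \<Rightarrow> real" where
  "total_variation g a b = Sup (partition_sums g a b)"

text \<open>Curves on the circle (unit circle in the complex plane): variation is
  that of the pulled-back map t \<mapsto> c (cis (2 pi t)) on [0,1]
  (equal to the sup over cyclically ordered partitions of the circle).\<close>
definition circle_param :: "(complex \<Rightarrow> 'a) \<Rightarrow> real \<Rightarrow> 'a" where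
  "circle_param c = (\<lambda>t. c (cis (2 * pi * t)))"

definition circle_bounded_variation :: "(complex \<Rightarrow> 'a::real_normed_vector) \<Rightarrow> bool" where
  "circle_bounded_variation c = bounded_variation_on (circle_param c) 0 1"

definition circle_total_variation :: "(complex \<Rightarrow> 'a::real_normed_vector) \<Rightarrow> real" where
  "circle_total_variation c = total_variation (circle_param c) 0 1"

end

theory Submission
  imports Defs "HOL-Complex_Analysis.Contour_Integration"
begin

(* Let V s be the variation of the curve g on [a, s]. Since dist (g s) (g s') <= |V s - V s'|,
   grouping the parameters s according to the band [k eps, (k + 1) eps) containing V s covers
   the image by at most l / eps + 1 sets of diameter <= eps. Their pairwise products cover the
   square of the image by (l / eps + 1)^2 sets of diameter <= sqrt 2 * eps, so that the
   delta-approximation of the Hausdorff measure is at most (pi / 4) (l / eps + 1)^2 (2 eps^2)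
   = (pi / 2) (l + eps)^2 for every small eps. The
   circle is handled through its parametrisation t |-> c (cis (2 pi t)) on [0, 1]. *)

lemma diameter_le_dist:
  fixes S :: "'a::metric_space set"
  assumes "0 \<le> d" and "\<And>x y. x \<in> S \<Longrightarrow> y \<in> S \<Longrightarrow> dist x y \<le> d"
  shows "diameter S \<le> d"
  using assms by (auto simp: diameter_def intro: cSUP_least)

lemma bounded_if_dist_le:
  fixes S :: "'a::metric_space set"
  assumes "\<And>x y. x \<in> S \<Longrightarrow> y \<in> S \<Longrightarrow> dist x y \<le> d"
  shows "bounded S"
proof (cases "S = {}")
  case False
  then obtain x where "x \<in> S" by blast
  with assms show ?thesis unfolding bounded_def by blast
qed simp

lemma diameter_Times_le:
  fixes U :: "'a::metric_space set" and V :: "'b::metric_space set"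
  assumes "bounded U" "bounded V" "diameter U \<le> d" "diameter V \<le> d"
  shows "diameter (U \<times> V) \<le> sqrt 2 * d"
proof (rule diameter_le_dist)
  have "0 \<le> d" using diameter_ge_0[OF assms(1)] assms(3) by linarith
  then show "0 \<le> sqrt 2 * d" by simp
  fix x y assume "x \<in> U \<times> V" "y \<in> U \<times> V"
  then have "dist (fst x) (fst y) \<le> d" "dist (snd x) (snd y) \<le> d"
    using assms diameter_bounded_bound by (fastforce simp: mem_Times_iff)+
  then have "dist x y \<le> sqrt (d\<^sup>2 + d\<^sup>2)"
    unfolding dist_prod_def by (intro real_sqrt_le_mono add_mono power_mono) auto
  also have "\<dots> = sqrt 2 * d"
    using \<open>0 \<le> d\<close> by (simp add: real_sqrt_mult)
  finally show "dist x y \<le> sqrt 2 * d" .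
qed

lemma hausdorff2_approx_le_finite_cover:
  fixes E :: "'a::metric_space set"
  assumes cover: "E \<subseteq> (\<Union>j<N. A j)"
    and bounded: "\<And>j. j < N \<Longrightarrow> bounded (A j)"
    and diameter: "\<And>j. j < N \<Longrightarrow> diameter (A j) \<le> r"
    and "0 \<le> r" "r < \<delta>"
  shows "hausdorff2_approx \<delta> E \<le> ennreal (real N * (pi / 4 * r\<^sup>2))"
proof -
  define A' where "A' j = (if j < N then A j else {})" for j
  have "E \<subseteq> (\<Union>j. A' j)" using cover by (auto simp: A'_def)
  moreover have "bounded (A' j) \<and> diameter (A' j) < \<delta>" for j
    using bounded diameter assms(4,5) by (auto simp: A'_def intro: le_less_trans)
  ultimately have "hausdorff2_approx \<delta> E \<le> (\<Sum>j. ennreal (pi / 4 * (diameter (A' j))\<^sup>2))"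
    unfolding hausdorff2_approx_def by (intro INF_lower) blast
  also have "\<dots> = (\<Sum>j<N. ennreal (pi / 4 * (diameter (A j))\<^sup>2))"
    by (subst suminf_finite[of "{..<N}"]) (auto simp: A'_def)
  also have "\<dots> \<le> (\<Sum>j<N. ennreal (pi / 4 * r\<^sup>2))"
    using bounded diameter diameter_ge_0
    by (intro sum_mono ennreal_leI mult_left_mono power_mono) auto
  also have "\<dots> = ennreal (real N * (pi / 4 * r\<^sup>2))"
    using ennreal_mult[of "real N" "pi / 4 * r\<^sup>2"] by (simp add: ennreal_of_nat_eq_real_of_nat)
  finally show ?thesis .
qed

lemma hausdorff2_approx_Times_le:
  fixes E F :: "'a::metric_space set"
  assumes "E \<subseteq> (\<Union>i<K. U i)" "F \<subseteq> (\<Union>j<L. V j)"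
    and "\<And>i. bounded (U i)" "\<And>i. diameter (U i) \<le> d"
    and "\<And>j. bounded (V j)" "\<And>j. diameter (V j) \<le> d"
    and "0 \<le> d" "sqrt 2 * d < \<delta>"
  shows "hausdorff2_approx \<delta> (E \<times> F) \<le> ennreal (pi / 2 * real K * real L * d\<^sup>2)"
proof -
  define A where "A n = U (n div L) \<times> V (n mod L)" for n
  have "E \<times> F \<subseteq> (\<Union>n<K * L. A n)"
  proof
    fix x assume "x \<in> E \<times> F"
    then have "fst x \<in> E" "snd x \<in> F" by (auto simp: mem_Times_iff)
    then obtain i j where "i < K" "j < L" "fst x \<in> U i" "snd x \<in> V j"
      using assms(1,2) by blast
    moreover have "i * L + j < K * L"
    proof -
      have "i * L + j < Suc i * L" using \<open>j < L\<close> by simp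
      also have "\<dots> \<le> K * L" using \<open>i < K\<close> by (intro mult_right_mono) auto
      finally show ?thesis .
    qed
    ultimately show "x \<in> (\<Union>n<K * L. A n)"
      by (auto simp: A_def mem_Times_iff intro!: bexI[of _ "i * L + j"])
  qed
  moreover have "bounded (A n)" "diameter (A n) \<le> sqrt 2 * d" for n
    using assms(3-6) by (auto simp: A_def bounded_Times intro: diameter_Times_le)
  ultimately have "hausdorff2_approx \<delta> (E \<times> F) \<le> ennreal (real (K * L) * (pi / 4 * (sqrt 2 * d)\<^sup>2))"
    using assms(7,8) by (intro hausdorff2_approx_le_finite_cover) auto
  also have "\<dots> = ennreal (pi / 2 * real K * real L * d\<^sup>2)"
    by (simp add: power_mult_distrib)
  finally show ?thesis .
qed

lemma norm_diff_in_partition_sums: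
  assumes "a \<le> b"
  shows "norm (g b - g a) \<in> partition_sums g a b"
  unfolding partition_sums_def mem_Collect_eq
  by (rule exI[of _ "\<lambda>i. if i = 0 then a else b"], rule exI[of _ 1]) (use assms in auto)

lemma partition_sums_extend:
  assumes "x \<in> partition_sums g a s" "s \<le> s'"
  shows "x + norm (g s' - g s) \<in> partition_sums g a s'"
proof -
  obtain t k where t: "t 0 = a" "t k = s" "\<forall>i<k. t i \<le> t (Suc i)"
    and x: "x = (\<Sum>i<k. norm (g (t (Suc i)) - g (t i)))"
    using assms(1) unfolding partition_sums_def by blast
  define t' where "t' i = (if i \<le> k then t i else s')" for i
  have "t' 0 = a" "t' (Suc k) = s'" "\<forall>i<Suc k. t' i \<le> t' (Suc i)"
    using t assms(2) by (auto simp: t'_def less_Suc_eq)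
  moreover have "(\<Sum>i<Suc k. norm (g (t' (Suc i)) - g (t' i))) = x + norm (g s' - g s)"
    using t(2) by (simp add: x t'_def)
  ultimately show ?thesis
    unfolding partition_sums_def mem_Collect_eq by (intro exI[of _ t'] exI[of _ "Suc k"]) simp
qed

lemma partition_sums_le_total_variation:
  assumes "bounded_variation_on g a b" "x \<in> partition_sums g a b"
  shows "x \<le> total_variation g a b"
  using assms unfolding bounded_variation_on_def total_variation_def by (rule cSup_upper[rotated])

lemma total_variation_nonneg:
  assumes "a \<le> b" "bounded_variation_on g a b"
  shows "0 \<le> total_variation g a b"
  using partition_sums_le_total_variation[OF assms(2) norm_diff_in_partition_sums[OF assms(1)]]
  by (meson norm_ge_zero order_trans)

lemma bounded_variation_on_initial_segment:
  assumes "bounded_variation_on g a b" "s \<le> b"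
  shows "bounded_variation_on g a s"
  unfolding bounded_variation_on_def bdd_above_def
proof (intro exI ballI)
  fix x assume "x \<in> partition_sums g a s"
  then have "x + norm (g b - g s) \<le> total_variation g a b"
    using assms by (intro partition_sums_le_total_variation partition_sums_extend)
  then show "x \<le> total_variation g a b" by (meson le_add_same_cancel1 norm_ge_zero order_trans)
qed

lemma total_variation_extend:
  assumes "a \<le> s" "s \<le> s'" "bounded_variation_on g a s'"
  shows "total_variation g a s + norm (g s' - g s) \<le> total_variation g a s'"
proof -
  have "total_variation g a s \<le> total_variation g a s' - norm (g s' - g s)"
    unfolding total_variation_def[of g a s]
  proof (rule cSup_least)
    show "partition_sums g a s \<noteq> {}" using norm_diff_in_partition_sums[OF assms(1)] by blast
  next
    fix x assume "x \<in> partition_sums g a s"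
    then have "x + norm (g s' - g s) \<le> total_variation g a s'"
      using assms by (intro partition_sums_le_total_variation partition_sums_extend)
    then show "x \<le> total_variation g a s' - norm (g s' - g s)" by simp
  qed
  then show ?thesis by simp
qed

lemma dist_le_total_variation_diff:
  fixes g :: "real \<Rightarrow> 'a::real_normed_vector"
  assumes "bounded_variation_on g a b" "a \<le> s" "s \<le> b" "a \<le> s'" "s' \<le> b"
  shows "dist (g s) (g s') \<le> \<bar>total_variation g a s - total_variation g a s'\<bar>"
proof -
  have "dist (g s) (g s') \<le> total_variation g a s' - total_variation g a s"
    if "a \<le> s" "s \<le> s'" "s' \<le> b" for s s'
    using total_variation_extend[OF that(1,2) bounded_variation_on_initial_segment[OF assms(1) that(3)]]
    by (simp add: dist_norm norm_minus_commute)
  then show ?thesis using assms(2-5) by (smt (verit) dist_commute)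
qed

lemma dominated_image_cover:
  fixes f :: "'b \<Rightarrow> 'a::metric_space" and V :: "'b \<Rightarrow> real"
  assumes dominated: "\<And>s s'. s \<in> S \<Longrightarrow> s' \<in> S \<Longrightarrow> dist (f s) (f s') \<le> \<bar>V s - V s'\<bar>"
    and range: "\<And>s. s \<in> S \<Longrightarrow> 0 \<le> V s \<and> V s \<le> l"
    and "0 \<le> l" "0 < \<epsilon>"
  obtains K U where "f ` S \<subseteq> (\<Union>k<K. U k)" "\<And>k. bounded (U k)"
    "\<And>k. diameter (U k) \<le> \<epsilon>" "real K \<le> l / \<epsilon> + 1"
proof -
  define U where "U k = f ` {s \<in> S. real k * \<epsilon> \<le> V s \<and> V s < (real k + 1) * \<epsilon>}" for k :: nat
  define K where "K = nat \<lfloor>l / \<epsilon>\<rfloor> + 1"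
  have dist_U: "dist x y \<le> \<epsilon>" if xy: "x \<in> U k" "y \<in> U k" for x y k
  proof -
    obtain s s' where "s \<in> S" "s' \<in> S" "x = f s" "y = f s'"
      and "real k * \<epsilon> \<le> V s" "V s < (real k + 1) * \<epsilon>"
      and "real k * \<epsilon> \<le> V s'" "V s' < (real k + 1) * \<epsilon>"
      using xy unfolding U_def by blast
    moreover from this have "\<bar>V s - V s'\<bar> < \<epsilon>" by (simp add: algebra_simps abs_less_iff)
    ultimately show ?thesis using dominated[of s s'] by simp
  qed
  have cover: "f ` S \<subseteq> (\<Union>k<K. U k)"
  proof
    fix x assume "x \<in> f ` S"
    then obtain s where "s \<in> S" "x = f s" by blast
    define k where "k = nat \<lfloor>V s / \<epsilon>\<rfloor>"
    have "real k = \<lfloor>V s / \<epsilon>\<rfloor>" using range[OF \<open>s \<in> S\<close>] \<open>0 < \<epsilon>\<close> by (simp add: k_def)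
    then have "real k * \<epsilon> \<le> V s \<and> V s < (real k + 1) * \<epsilon>"
      using \<open>0 < \<epsilon>\<close> by (metis floor_divide_lower floor_divide_upper)
    moreover have "k < K"
      using range[OF \<open>s \<in> S\<close>] \<open>0 < \<epsilon>\<close> unfolding k_def K_def
      by (simp add: floor_mono divide_right_mono nat_mono le_imp_less_Suc)
    ultimately show "x \<in> (\<Union>k<K. U k)" using \<open>s \<in> S\<close> \<open>x = f s\<close> unfolding U_def by blast
  qed
  have K_bound: "real K \<le> l / \<epsilon> + 1" using \<open>0 \<le> l\<close> \<open>0 < \<epsilon>\<close> by (simp add: K_def)
  show thesis
  proof (rule that[OF cover _ _ K_bound])
    show "bounded (U k)" for k using dist_U by (rule bounded_if_dist_le)
    show "diameter (U k) \<le> \<epsilon>" for k using dist_U \<open>0 < \<epsilon>\<close> by (intro diameter_le_dist) auto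
  qed
qed

lemma bounded_variation_image_cover:
  fixes g :: "real \<Rightarrow> 'a::real_normed_vector"
  assumes "a \<le> b" "bounded_variation_on g a b" "0 < \<epsilon>"
  obtains K U where "g ` {a..b} \<subseteq> (\<Union>k<K. U k)" "\<And>k. bounded (U k)"
    "\<And>k. diameter (U k) \<le> \<epsilon>" "real K \<le> total_variation g a b / \<epsilon> + 1"
proof (rule dominated_image_cover[of "{a..b}" g "total_variation g a"])
  fix s s' assume "s \<in> {a..b}" "s' \<in> {a..b}"
  then show "dist (g s) (g s') \<le> \<bar>total_variation g a s - total_variation g a s'\<bar>"
    using dist_le_total_variation_diff[OF assms(2)] by simp
next
  fix s assume "s \<in> {a..b}"
  then have "a \<le> s" "s \<le> b" by auto
  show "0 \<le> total_variation g a s \<and> total_variation g a s \<le> total_variation g a b"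
    using total_variation_nonneg[OF \<open>a \<le> s\<close> bounded_variation_on_initial_segment[OF assms(2) \<open>s \<le> b\<close>]]
      total_variation_extend[OF \<open>a \<le> s\<close> \<open>s \<le> b\<close> assms(2)] norm_ge_zero[of "g b - g s"]
    by linarith
qed (use assms total_variation_nonneg that in auto)

lemma hausdorff2_approx_bounded_variation_image_square_le:
  fixes g :: "real \<Rightarrow> 'a::real_normed_vector"
  assumes "a \<le> b" "bounded_variation_on g a b" "0 < \<epsilon>" "sqrt 2 * \<epsilon> < \<delta>"
  shows "hausdorff2_approx \<delta> (g ` {a..b} \<times> g ` {a..b})
    \<le> ennreal (pi / 2 * (total_variation g a b + \<epsilon>)\<^sup>2)"
proof -
  obtain K U where cover: "g ` {a..b} \<subseteq> (\<Union>k<K. U k)"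
    and U: "\<And>k. bounded (U k)" "\<And>k. diameter (U k) \<le> \<epsilon>"
    and K: "real K \<le> total_variation g a b / \<epsilon> + 1"
    using bounded_variation_image_cover[OF assms(1-3)] by metis
  have "hausdorff2_approx \<delta> (g ` {a..b} \<times> g ` {a..b}) \<le> ennreal (pi / 2 * real K * real K * \<epsilon>\<^sup>2)"
    using assms(3,4) by (intro hausdorff2_approx_Times_le[OF cover cover U U]) auto
  also have "\<dots> \<le> ennreal (pi / 2 * (total_variation g a b + \<epsilon>)\<^sup>2)"
  proof (rule ennreal_leI)
    have "real K * \<epsilon> \<le> total_variation g a b + \<epsilon>" using K \<open>0 < \<epsilon>\<close> by (simp add: field_simps)
    then have "(real K * \<epsilon>)\<^sup>2 \<le> (total_variation g a b + \<epsilon>)\<^sup>2"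
      using \<open>0 < \<epsilon>\<close> by (intro power_mono) auto
    then show "pi / 2 * real K * real K * \<epsilon>\<^sup>2 \<le> pi / 2 * (total_variation g a b + \<epsilon>)\<^sup>2"
      by (simp add: power2_eq_square mult_ac)
  qed
  finally show ?thesis .
qed

lemma hausdorff2_bounded_variation_image_square_le:
  fixes g :: "real \<Rightarrow> 'a::real_normed_vector"
  assumes "a \<le> b" "bounded_variation_on g a b"
  shows "hausdorff2 (g ` {a..b} \<times> g ` {a..b}) \<le> ennreal (pi / 2 * (total_variation g a b)\<^sup>2)"
  unfolding hausdorff2_def
proof (rule SUP_least)
  fix \<delta> :: real assume "\<delta> \<in> {0<..}"
  let ?l = "total_variation g a b"
  have "eventually (\<lambda>\<epsilon>. \<epsilon> \<in> {0<..<\<delta> / 2}) (at_right 0)"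
    using \<open>\<delta> \<in> {0<..}\<close> by (intro eventually_at_right_real) simp
  then have bound: "eventually (\<lambda>\<epsilon>. hausdorff2_approx \<delta> (g ` {a..b} \<times> g ` {a..b})
      \<le> ennreal (pi / 2 * (?l + \<epsilon>)\<^sup>2)) (at_right 0)"
  proof eventually_elim
    case (elim \<epsilon>)
    have "sqrt 2 * \<epsilon> < 2 * \<epsilon>" "2 * \<epsilon> < \<delta>" using elim by (auto simp: real_less_lsqrt)
    then have "sqrt 2 * \<epsilon> < \<delta>" by linarith
    with elim show ?case by (intro hausdorff2_approx_bounded_variation_image_square_le[OF assms]) auto
  qed
  have limit: "((\<lambda>\<epsilon>. ennreal (pi / 2 * (?l + \<epsilon>)\<^sup>2)) \<longlongrightarrow> ennreal (pi / 2 * ?l\<^sup>2)) (at_right 0)"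
    by (auto intro!: tendsto_eq_intros)
  show "hausdorff2_approx \<delta> (g ` {a..b} \<times> g ` {a..b}) \<le> ennreal (pi / 2 * ?l\<^sup>2)"
    using limit bound by (rule tendsto_lowerbound) simp
qed

lemma circle_param_image: "circle_param c ` {0..1} = c ` sphere 0 1"
proof -
  have "circle_param c = c \<circ> circlepath 0 1"
    by (simp add: circle_param_def circlepath cis_conv_exp fun_eq_iff mult_ac)
  then have "circle_param c ` {0..1} = c ` path_image (circlepath 0 1)"
    by (simp add: path_image_def image_comp)
  then show ?thesis by simp
qed

theorem lemma5p1:
  fixes g :: "real \<Rightarrow> 'a::euclidean_space"
    and c :: "complex \<Rightarrow> 'a"
    and a b l :: real
  shows "(a \<le> b \<and> continuous_on {a..b} g \<and> bounded_variation_on g a b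
            \<and> l = total_variation g a b
          \<longrightarrow> hausdorff2 (g ` {a..b} \<times> g ` {a..b}) \<le> ennreal (pi / 2 * l\<^sup>2)
            \<and> hausdorff2 (g ` {a..b} \<times> g ` {a..b}) < \<infinity>)
       \<and> (continuous_on (sphere 0 1) c \<and> circle_bounded_variation c
            \<and> l = circle_total_variation c
          \<longrightarrow> hausdorff2 (c ` sphere 0 1 \<times> c ` sphere 0 1) \<le> ennreal (pi / 2 * l\<^sup>2)
            \<and> hausdorff2 (c ` sphere 0 1 \<times> c ` sphere 0 1) < \<infinity>)"
proof (intro conjI impI)
  assume "a \<le> b \<and> continuous_on {a..b} g \<and> bounded_variation_on g a b \<and> l = total_variation g a b"
  then show bound: "hausdorff2 (g ` {a..b} \<times> g ` {a..b}) \<le> ennreal (pi / 2 * l\<^sup>2)"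
    using hausdorff2_bounded_variation_image_square_le by blast
  then show "hausdorff2 (g ` {a..b} \<times> g ` {a..b}) < \<infinity>"
    by (simp add: ennreal_less_top le_less_trans)
next
  assume "continuous_on (sphere 0 1) c \<and> circle_bounded_variation c \<and> l = circle_total_variation c"
  then show bound: "hausdorff2 (c ` sphere 0 1 \<times> c ` sphere 0 1) \<le> ennreal (pi / 2 * l\<^sup>2)"
    using hausdorff2_bounded_variation_image_square_le[of 0 1 "circle_param c"]
    by (simp add: circle_bounded_variation_def circle_total_variation_def circle_param_image)
  then show "hausdorff2 (c ` sphere 0 1 \<times> c ` sphere 0 1) < \<infinity>"
    by (simp add: ennreal_less_top le_less_trans)
qed

end
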